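(* Let $\phi_1,\dots,\phi_m:\mathbb{R}^n\to\mathbb{R}$ be softmax-type functions, i.e. for each $i\in[m]$ there are $j_i\in[n]$ and $\xi_{i1},\dots,\xi_{in}\ge0$ with $\sum_k\xi_{ik}=1$ such that $\phi_i(z)=\frac{\exp(z_{j_i})}{\sum_{k=1}^n\xi_{ik}\exp(z_k)}$. Let $\sum_{\gamma\in\mathbb{Z}_{\ge0}^n}a_\gamma z^\gamma$ be the Taylor series at $0$ of $\prod_{i=1}^m\phi_i$. Then for every integer $k\ge0$, $$\sum_{\gamma\in\mathbb{Z}_{\ge0}^n:\,|\gamma|=k}|a_\gamma|\le(e^3m)^k.$$
   Context: $z^\gamma=z_1^{\gamma_1}\cdots z_n^{\gamma_n}$ and $|\gamma|=\gamma_1+\dots+\gamma_n$. *)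

theory Defs
  imports "HOL-Analysis.Analysis"
begin

text \<open>Points of R^n are represented as functions nat => real; only the coordinates
  0..n-1 are relevant (coordinate k of the paper is index k-1 here).\<close>

definition partial :: "nat \<Rightarrow> ((nat \<Rightarrow> real) \<Rightarrow> real) \<Rightarrow> ((nat \<Rightarrow> real) \<Rightarrow> real)" where
  "partial k f = (\<lambda>z. deriv (\<lambda>t. f (z(k := t))) (z k))"

definition mixed_partial :: "nat \<Rightarrow> (nat \<Rightarrow> nat) \<Rightarrow> ((nat \<Rightarrow> real) \<Rightarrow> real) \<Rightarrow> ((nat \<Rightarrow> real) \<Rightarrow> real)" where
  "mixed_partial n \<gamma> f = foldr (\<lambda>k g. (partial k ^^ \<gamma> k) g) [0..<n] f"

definition taylor_coeff :: "nat \<Rightarrow> ((nat \<Rightarrow> real) \<Rightarrow> real) \<Rightarrow> (nat \<Rightarrow> nat) \<Rightarrow> real" where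
  "taylor_coeff n f \<gamma> = mixed_partial n \<gamma> f (\<lambda>_. 0) / (\<Prod>k<n. fact (\<gamma> k))"

definition multi_indices :: "nat \<Rightarrow> nat \<Rightarrow> (nat \<Rightarrow> nat) set" where
  "multi_indices n d = {\<gamma>. (\<forall>k. n \<le> k \<longrightarrow> \<gamma> k = 0) \<and> (\<Sum>k<n. \<gamma> k) = d}"

definition softmax_type :: "nat \<Rightarrow> nat \<Rightarrow> (nat \<Rightarrow> real) \<Rightarrow> (nat \<Rightarrow> real) \<Rightarrow> real" where
  "softmax_type n j \<xi> z = exp (z j) / (\<Sum>k<n. \<xi> k * exp (z k))"

end

theory Submission
  imports Defs
begin

(* With D_i(z) = sum_k xi_ik exp z_k, the softmax product is the monomial
   exp(alpha . z) / prod_i D_i(z)^beta_i with |alpha| = |beta| = m.  By the quotient rule, d_l of a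
   monomial is alpha_l times itself minus sum_i beta_i xi_il times the monomial with alpha_l and
   beta_i raised by one.  Hence derivatives stay combinations of monomials, each differentiation
   raises the degree |alpha| + |beta| by at most 2, and, as sum_l xi_il = 1, the l1-norms of the
   coefficients of all d_l together are at most the degree times the original one; every monomial
   equals 1 at the origin.  Because the partials commute, the l1-norm of the Taylor coefficients of
   order k + 1 of f is (sum_l of the order-k norm for d_l f) / (k + 1), and induction on k bounds it
   for the softmax product by prod_{t<k} (2m + 2t) / k! <= (2m)^k <= (e^3 m)^k. *)

section \<open>Multi-indices\<close>

lemma sum_fun_upd_add:
  fixes f :: "'a \<Rightarrow> 'b::comm_monoid_add"
  assumes "finite A" "a \<in> A"
  shows "sum (f(a := f a + c)) A = sum f A + c"
proof -
  have "sum (f(a := f a + c)) (A - {a}) = sum f (A - {a})"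
    by (rule sum.cong) auto
  then show ?thesis
    using assms by (simp add: sum.remove[of A a] add_ac)
qed

lemma sum_fun_upd_Suc:
  "finite A \<Longrightarrow> a \<in> A \<Longrightarrow> sum (f(a := Suc (f a))) A = Suc (sum f A)"
  using sum_fun_upd_add[of A a f 1] by simp

lemma finite_multi_indices: "finite (multi_indices n d)"
proof (rule finite_subset)
  show "multi_indices n d \<subseteq> {\<gamma>. \<forall>k. (k \<in> {..<n} \<longrightarrow> \<gamma> k \<in> {..d}) \<and> (k \<notin> {..<n} \<longrightarrow> \<gamma> k = 0)}"
  proof (clarsimp simp: multi_indices_def)
    fix \<gamma> :: "nat \<Rightarrow> nat" and k assume "\<forall>k\<ge>n. \<gamma> k = 0" "k < n"
    then show "\<gamma> k \<le> (\<Sum>k<n. \<gamma> k)" by (intro member_le_sum) auto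
  qed
  show "finite {\<gamma>. \<forall>k. (k \<in> {..<n} \<longrightarrow> \<gamma> k \<in> {..d}) \<and> (k \<notin> {..<n} \<longrightarrow> \<gamma> k = (0::nat))}"
    by (rule finite_set_of_finite_funs) auto
qed

lemma multi_indices_0: "multi_indices n 0 = {\<lambda>_. 0}"
  by (auto simp: multi_indices_def fun_eq_iff) (metis lessThan_iff not_less)

lemma multi_indices_dec:
  assumes "l < n" "\<gamma> \<in> multi_indices n (Suc d)" "0 < \<gamma> l"
  shows "\<gamma>(l := \<gamma> l - 1) \<in> multi_indices n d"
proof -
  let ?\<delta> = "\<gamma>(l := \<gamma> l - 1)"
  have "\<gamma> = ?\<delta>(l := ?\<delta> l + 1)" using assms(3) by auto
  then have "sum \<gamma> {..<n} = sum ?\<delta> {..<n} + 1"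
    using sum_fun_upd_add[of "{..<n}" l ?\<delta> 1] assms(1) by simp
  then show ?thesis using assms by (auto simp: multi_indices_def)
qed

lemma multi_indices_inc:
  assumes "l < n" "\<delta> \<in> multi_indices n d"
  shows "\<delta>(l := Suc (\<delta> l)) \<in> multi_indices n (Suc d)"
  using sum_fun_upd_Suc[of "{..<n}" l \<delta>] assms by (auto simp: multi_indices_def)

lemma prod_fact_fun_upd_dec:
  fixes \<gamma> :: "nat \<Rightarrow> nat"
  assumes "l < n" "0 < \<gamma> l"
  shows "(\<Prod>k<n. fact (\<gamma> k) :: real) = real (\<gamma> l) * (\<Prod>k<n. fact ((\<gamma>(l := \<gamma> l - 1)) k))"
proof -
  let ?\<delta> = "\<gamma>(l := \<gamma> l - 1)"
  have "(\<Prod>k<n. fact (?\<delta> k) :: real) = fact (?\<delta> l) * (\<Prod>k\<in>{..<n}-{l}. fact (?\<delta> k))"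
    using assms(1) by (intro prod.remove) auto
  also have "(\<Prod>k\<in>{..<n}-{l}. fact (?\<delta> k) :: real) = (\<Prod>k\<in>{..<n}-{l}. fact (\<gamma> k))"
    by (rule prod.cong) auto
  finally have "(\<Prod>k<n. fact (?\<delta> k) :: real) = fact (\<gamma> l - 1) * (\<Prod>k\<in>{..<n}-{l}. fact (\<gamma> k))"
    by simp
  moreover have "(fact (\<gamma> l) :: real) = real (\<gamma> l) * fact (\<gamma> l - 1)"
    using assms(2) by (rule fact_reduce)
  ultimately show ?thesis
    using assms(1) by (simp add: prod.remove[of "{..<n}" l])
qed

lemma sum_multi_indices_shift:
  assumes "l < n"
  shows "(\<Sum>\<gamma>\<in>multi_indices n (Suc d). real (\<gamma> l) * h (\<gamma>(l := \<gamma> l - 1)) / (\<Prod>k<n. fact (\<gamma> k)))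
       = (\<Sum>\<delta>\<in>multi_indices n d. h \<delta> / (\<Prod>k<n. fact (\<delta> k)))"
proof -
  let ?S = "{\<gamma>\<in>multi_indices n (Suc d). 0 < \<gamma> l}"
  have "(\<Sum>\<gamma>\<in>multi_indices n (Suc d). real (\<gamma> l) * h (\<gamma>(l := \<gamma> l - 1)) / (\<Prod>k<n. fact (\<gamma> k)))
      = (\<Sum>\<gamma>\<in>?S. real (\<gamma> l) * h (\<gamma>(l := \<gamma> l - 1)) / (\<Prod>k<n. fact (\<gamma> k)))"
    by (rule sum.mono_neutral_right[OF finite_multi_indices]) auto
  also have "\<dots> = (\<Sum>\<delta>\<in>multi_indices n d. h \<delta> / (\<Prod>k<n. fact (\<delta> k)))"
  proof (rule sum.reindex_bij_witness[where j = "\<lambda>\<gamma>. \<gamma>(l := \<gamma> l - 1)" and i = "\<lambda>\<delta>. \<delta>(l := Suc (\<delta> l))"])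
    fix \<gamma> assume "\<gamma> \<in> ?S"
    then show "h (\<gamma>(l := \<gamma> l - 1)) / (\<Prod>k<n. fact ((\<gamma>(l := \<gamma> l - 1)) k)) =
        real (\<gamma> l) * h (\<gamma>(l := \<gamma> l - 1)) / (\<Prod>k<n. fact (\<gamma> k))"
      using prod_fact_fun_upd_dec[OF assms, of \<gamma>] by simp
  qed (use assms multi_indices_dec multi_indices_inc in auto)
  finally show ?thesis .
qed

section \<open>Commuting partial derivatives\<close>

definition taylor_norm :: "nat \<Rightarrow> nat \<Rightarrow> ((nat \<Rightarrow> real) \<Rightarrow> real) \<Rightarrow> real" where
  "taylor_norm n d f = (\<Sum>\<gamma>\<in>multi_indices n d. \<bar>taylor_coeff n f \<gamma>\<bar>)"

lemma abs_taylor_coeff: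
  "\<bar>taylor_coeff n f \<gamma>\<bar> = \<bar>mixed_partial n \<gamma> f (\<lambda>_. 0)\<bar> / (\<Prod>k<n. fact (\<gamma> k))"
  by (simp add: taylor_coeff_def abs_divide abs_of_pos prod_pos)

lemma mixed_partial_Suc:
  "mixed_partial (Suc N) \<gamma> f = mixed_partial N \<gamma> ((partial N ^^ \<gamma> N) f)"
  by (simp add: mixed_partial_def)

lemma mixed_partial_cong:
  "(\<And>k. k < N \<Longrightarrow> \<gamma> k = \<gamma>' k) \<Longrightarrow> mixed_partial N \<gamma> f = mixed_partial N \<gamma>' f"
  unfolding mixed_partial_def by (intro foldr_cong) auto

lemma mixed_partial_0: "(\<And>k. k < N \<Longrightarrow> \<gamma> k = 0) \<Longrightarrow> mixed_partial N \<gamma> f = f"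
proof -
  assume "\<And>k. k < N \<Longrightarrow> \<gamma> k = 0"
  then have "mixed_partial N \<gamma> f = mixed_partial N (\<lambda>_. 0) f" by (rule mixed_partial_cong)
  also have "\<dots> = f" by (induction N) (simp_all add: mixed_partial_Suc mixed_partial_def)
  finally show ?thesis .
qed

lemma taylor_norm_0: "taylor_norm n 0 f = \<bar>f (\<lambda>_. 0)\<bar>"
  by (simp add: taylor_norm_def taylor_coeff_def multi_indices_0 mixed_partial_0)

locale commuting_partials =
  fixes n :: nat and S :: "((nat \<Rightarrow> real) \<Rightarrow> real) set"
  assumes partial_closed: "f \<in> S \<Longrightarrow> k < n \<Longrightarrow> partial k f \<in> S"
    and partial_commute: "f \<in> S \<Longrightarrow> k < n \<Longrightarrow> l < n \<Longrightarrow> partial k (partial l f) = partial l (partial k f)"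
begin

lemma funpow_partial_closed: "f \<in> S \<Longrightarrow> k < n \<Longrightarrow> (partial k ^^ a) f \<in> S"
  by (induction a) (auto intro: partial_closed)

lemma funpow_partial_commute:
  assumes "k < n" "l < n"
  shows "f \<in> S \<Longrightarrow> (partial k ^^ a) (partial l f) = partial l ((partial k ^^ a) f)"
proof (induction a arbitrary: f)
  case (Suc a)
  have "(partial k ^^ Suc a) (partial l f) = (partial k ^^ a) (partial l (partial k f))"
    using partial_commute[OF Suc.prems assms] by (simp only: funpow_Suc_right o_apply)
  also have "\<dots> = partial l ((partial k ^^ Suc a) f)"
    using Suc.IH[OF partial_closed[OF Suc.prems assms(1)]] by (simp only: funpow_Suc_right o_apply)
  finally show ?case .
qed simp

lemma mixed_partial_pull_out:
  assumes "N \<le> n" "l < N" "0 < \<gamma> l" "f \<in> S"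
  shows "mixed_partial N \<gamma> f = mixed_partial N (\<gamma>(l := \<gamma> l - 1)) (partial l f)"
  using assms
proof (induction N arbitrary: f)
  case (Suc N)
  let ?\<gamma>' = "\<gamma>(l := \<gamma> l - 1)"
  have N: "N < n" using Suc.prems by simp
  show ?case
  proof (cases "l = N")
    case True
    then have "\<gamma> N = Suc (?\<gamma>' N)" using Suc.prems by simp
    then have "(partial N ^^ \<gamma> N) f = (partial N ^^ ?\<gamma>' N) (partial N f)"
      by (simp only: funpow_Suc_right o_apply)
    moreover have "mixed_partial N \<gamma> g = mixed_partial N ?\<gamma>' g" for g
      using True by (intro mixed_partial_cong) simp
    ultimately show ?thesis by (simp only: mixed_partial_Suc True)
  next
    case False
    then have "l < N" "l < n" using Suc.prems by simp_all
    have "mixed_partial (Suc N) \<gamma> f = mixed_partial N ?\<gamma>' (partial l ((partial N ^^ \<gamma> N) f))"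
      unfolding mixed_partial_Suc
      using Suc.prems by (intro Suc.IH \<open>l < N\<close> funpow_partial_closed N) simp_all
    also have "partial l ((partial N ^^ \<gamma> N) f) = (partial N ^^ ?\<gamma>' N) (partial l f)"
      using funpow_partial_commute[OF N \<open>l < n\<close> Suc.prems(4)] False by simp
    finally show ?thesis by (simp only: mixed_partial_Suc)
  qed
qed simp

text \<open>Write \<open>1 = \<Sum>\<^sub>l \<gamma>\<^sub>l / (d + 1)\<close>; for \<open>\<gamma>\<^sub>l > 0\<close> differentiate in direction \<open>l\<close> first
  and use \<open>\<gamma>\<^sub>l / \<gamma>! = 1 / (\<gamma> - e\<^sub>l)!\<close>.\<close>

lemma taylor_norm_Suc:
  assumes "f \<in> S"
  shows "taylor_norm n (Suc d) f = (\<Sum>l<n. taylor_norm n d (partial l f)) / real (Suc d)"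
proof -
  have pull: "real (\<gamma> l) * \<bar>taylor_coeff n f \<gamma>\<bar>
      = real (\<gamma> l) * \<bar>mixed_partial n (\<gamma>(l := \<gamma> l - 1)) (partial l f) (\<lambda>_. 0)\<bar> / (\<Prod>k<n. fact (\<gamma> k))" if "l < n" for \<gamma> l
  proof (cases "\<gamma> l = 0")
    case False
    then show ?thesis
      using mixed_partial_pull_out[of n l \<gamma> f] that assms by (simp add: abs_taylor_coeff)
  qed simp
  have "taylor_norm n (Suc d) f
      = (\<Sum>\<gamma>\<in>multi_indices n (Suc d). \<Sum>l<n. real (\<gamma> l) * \<bar>taylor_coeff n f \<gamma>\<bar> / real (Suc d))"
    unfolding taylor_norm_def
  proof (intro sum.cong refl)
    fix \<gamma> assume "\<gamma> \<in> multi_indices n (Suc d)"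
    then have "(\<Sum>l<n. real (\<gamma> l)) = real (Suc d)" by (simp add: multi_indices_def flip: of_nat_sum)
    then show "\<bar>taylor_coeff n f \<gamma>\<bar> = (\<Sum>l<n. real (\<gamma> l) * \<bar>taylor_coeff n f \<gamma>\<bar> / real (Suc d))"
      by (simp flip: sum_divide_distrib sum_distrib_right)
  qed
  also have "\<dots> = (\<Sum>l<n. (\<Sum>\<gamma>\<in>multi_indices n (Suc d).
      real (\<gamma> l) * \<bar>mixed_partial n (\<gamma>(l := \<gamma> l - 1)) (partial l f) (\<lambda>_. 0)\<bar> / (\<Prod>k<n. fact (\<gamma> k))) / real (Suc d))"
    unfolding sum.swap[of _ "multi_indices n (Suc d)"] sum_divide_distrib
    by (intro sum.cong refl) (simp add: pull)
  also have "\<dots> = (\<Sum>l<n. (\<Sum>\<delta>\<in>multi_indices n d. \<bar>mixed_partial n \<delta> (partial l f) (\<lambda>_. 0)\<bar> / (\<Prod>k<n. fact (\<delta> k))) / real (Suc d))"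
    using sum_multi_indices_shift[where h = "\<lambda>\<delta>. \<bar>mixed_partial n \<delta> (partial l f) (\<lambda>_. 0)\<bar>" for l]
    by (intro sum.cong refl) simp
  also have "\<dots> = (\<Sum>l<n. taylor_norm n d (partial l f)) / real (Suc d)"
    unfolding taylor_norm_def abs_taylor_coeff sum_divide_distrib ..
  finally show ?thesis .
qed

end

section \<open>Monomials in the softmax denominators\<close>

text \<open>Finite linear combinations \<open>\<Sum> c * mon \<alpha> \<beta>\<close>, as lists of triples \<open>(c, \<alpha>, \<beta>)\<close>.\<close>

type_synonym mon_sum = "(real \<times> (nat \<Rightarrow> nat) \<times> (nat \<Rightarrow> nat)) list"

definition msum_norm :: "mon_sum \<Rightarrow> real" where
  "msum_norm P = sum_list (map (\<lambda>(c, \<alpha>, \<beta>). \<bar>c\<bar>) P)"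

lemma msum_norm_simps [simp]:
  "msum_norm [] = 0"
  "msum_norm ((c, \<alpha>, \<beta>) # P) = \<bar>c\<bar> + msum_norm P"
  "msum_norm (P @ Q) = msum_norm P + msum_norm Q"
  by (simp_all add: msum_norm_def)

lemma has_real_derivative_fun_upd:
  "((\<lambda>t. (z(l := t)) k) has_real_derivative (if k = l then 1 else 0)) (at x)"
  by (cases "k = l") (auto intro!: derivative_eq_intros)

lemma sum_card_fibres:
  fixes m n :: nat and j :: "nat \<Rightarrow> nat" and z :: "nat \<Rightarrow> real"
  assumes "\<And>i. i < m \<Longrightarrow> j i < n"
  shows "(\<Sum>k<n. real (card {i\<in>{..<m}. j i = k}) * z k) = (\<Sum>i<m. z (j i))"
proof -
  have "(\<Sum>k<n. real (card {i\<in>{..<m}. j i = k}) * z k) = (\<Sum>k<n. \<Sum>i\<in>{i\<in>{..<m}. j i = k}. z (j i))"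
    by (intro sum.cong refl) simp
  also have "\<dots> = (\<Sum>i<m. z (j i))"
    by (rule sum.group) (use assms in auto)
  finally show ?thesis .
qed

locale softmax_weights =
  fixes n m :: nat and \<xi> :: "nat \<Rightarrow> nat \<Rightarrow> real"
  assumes weights_nonneg: "\<And>i k. i < m \<Longrightarrow> k < n \<Longrightarrow> \<xi> i k \<ge> 0"
    and weights_sum: "\<And>i. i < m \<Longrightarrow> (\<Sum>k<n. \<xi> i k) = 1"
begin

definition denom :: "nat \<Rightarrow> (nat \<Rightarrow> real) \<Rightarrow> real" where
  "denom i z = (\<Sum>k<n. \<xi> i k * exp (z k))"

definition mon :: "(nat \<Rightarrow> nat) \<Rightarrow> (nat \<Rightarrow> nat) \<Rightarrow> (nat \<Rightarrow> real) \<Rightarrow> real" where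
  "mon \<alpha> \<beta> z = exp ((\<Sum>k<n. real (\<alpha> k) * z k) - (\<Sum>i<m. real (\<beta> i) * ln (denom i z)))"

definition share :: "nat \<Rightarrow> nat \<Rightarrow> (nat \<Rightarrow> real) \<Rightarrow> real" where
  "share i l z = \<xi> i l * exp (z l) / denom i z"

definition log_partial :: "nat \<Rightarrow> (nat \<Rightarrow> nat) \<Rightarrow> (nat \<Rightarrow> nat) \<Rightarrow> (nat \<Rightarrow> real) \<Rightarrow> real" where
  "log_partial l \<alpha> \<beta> z = real (\<alpha> l) - (\<Sum>i<m. real (\<beta> i) * share i l z)"

lemma denom_pos: "i < m \<Longrightarrow> denom i z > 0"
proof -
  assume i: "i < m"
  then obtain k where k: "k < n" "\<xi> i k \<noteq> 0"
    using weights_sum[OF i] by (metis (mono_tags, lifting) sum.neutral zero_neq_one lessThan_iff)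
  then have "0 < \<xi> i k * exp (z k)" using weights_nonneg[OF i k(1)] by simp
  also have "\<dots> \<le> denom i z"
    unfolding denom_def by (rule member_le_sum) (use k weights_nonneg[OF i] in auto)
  finally show ?thesis .
qed

lemma denom_has_derivative:
  assumes "l < n"
  shows "((\<lambda>t. denom i (z(l := t))) has_real_derivative \<xi> i l * exp x) (at x)"
proof -
  have "((\<lambda>t. \<Sum>k<n. \<xi> i k * exp ((z(l := t)) k)) has_real_derivative
      (\<Sum>k<n. \<xi> i k * (exp ((z(l := x)) k) * (if k = l then 1 else 0)))) (at x)"
    by (intro DERIV_sum DERIV_cmult DERIV_fun_exp has_real_derivative_fun_upd)
  moreover have "(\<Sum>k<n. \<xi> i k * (exp ((z(l := x)) k) * (if k = l then 1 else 0))) = \<xi> i l * exp x"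
    using assms by (simp add: if_distrib cong: if_cong)
  ultimately show ?thesis unfolding denom_def by simp
qed

lemma mon_has_derivative:
  assumes l: "l < n"
  shows "((\<lambda>t. mon \<alpha> \<beta> (z(l := t))) has_real_derivative mon \<alpha> \<beta> z * log_partial l \<alpha> \<beta> z) (at (z l))"
proof -
  have "((\<lambda>t. \<Sum>k<n. real (\<alpha> k) * (z(l := t)) k) has_real_derivative
      (\<Sum>k<n. real (\<alpha> k) * (if k = l then 1 else 0))) (at (z l))"
    by (intro DERIV_sum DERIV_cmult has_real_derivative_fun_upd)
  then have lin: "((\<lambda>t. \<Sum>k<n. real (\<alpha> k) * (z(l := t)) k) has_real_derivative real (\<alpha> l)) (at (z l))"
    using l by (simp add: if_distrib cong: if_cong)
  have "((\<lambda>t. \<Sum>i<m. real (\<beta> i) * ln (denom i (z(l := t)))) has_real_derivative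
      (\<Sum>i<m. real (\<beta> i) * (inverse (denom i (z(l := z l))) * (\<xi> i l * exp (z l))))) (at (z l))"
  proof (intro DERIV_sum DERIV_cmult)
    fix i assume "i \<in> {..<m}"
    then show "((\<lambda>t. ln (denom i (z(l := t)))) has_real_derivative
        inverse (denom i (z(l := z l))) * (\<xi> i l * exp (z l))) (at (z l))"
      by (intro DERIV_chain2[OF DERIV_ln denom_has_derivative[OF l]]) (simp add: denom_pos)
  qed
  then have "((\<lambda>t. \<Sum>i<m. real (\<beta> i) * ln (denom i (z(l := t)))) has_real_derivative
      (\<Sum>i<m. real (\<beta> i) * (\<xi> i l * exp (z l) / denom i z))) (at (z l))"
    by (simp add: field_simps)
  from DERIV_fun_exp[OF DERIV_diff[OF lin this]]
  show ?thesis by (simp add: mon_def log_partial_def share_def)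
qed

lemma mon_fun_upd_Suc:
  assumes "l < n" "i < m"
  shows "mon (\<alpha>(l := Suc (\<alpha> l))) (\<beta>(i := Suc (\<beta> i))) z = mon \<alpha> \<beta> z * (exp (z l) / denom i z)"
proof -
  have "(\<lambda>k. real ((\<alpha>(l := Suc (\<alpha> l))) k) * z k) = (\<lambda>k. real (\<alpha> k) * z k)(l := real (\<alpha> l) * z l + z l)"
    by (simp add: fun_eq_iff algebra_simps)
  then have "(\<Sum>k<n. real ((\<alpha>(l := Suc (\<alpha> l))) k) * z k) = (\<Sum>k<n. real (\<alpha> k) * z k) + z l"
    using sum_fun_upd_add[of "{..<n}" l "\<lambda>k. real (\<alpha> k) * z k" "z l"] assms(1) by (simp only:) simp
  moreover have "(\<lambda>k. real ((\<beta>(i := Suc (\<beta> i))) k) * ln (denom k z))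
      = (\<lambda>k. real (\<beta> k) * ln (denom k z))(i := real (\<beta> i) * ln (denom i z) + ln (denom i z))"
    by (simp add: fun_eq_iff algebra_simps)
  then have "(\<Sum>k<m. real ((\<beta>(i := Suc (\<beta> i))) k) * ln (denom k z))
      = (\<Sum>k<m. real (\<beta> k) * ln (denom k z)) + ln (denom i z)"
    using sum_fun_upd_add[of "{..<m}" i "\<lambda>k. real (\<beta> k) * ln (denom k z)" "ln (denom i z)"] assms(2)
    by (simp only:) simp
  ultimately show ?thesis
    using denom_pos[OF assms(2), of z] by (simp add: mon_def exp_diff exp_add)
qed

definition msum_val :: "mon_sum \<Rightarrow> (nat \<Rightarrow> real) \<Rightarrow> real" where
  "msum_val P z = sum_list (map (\<lambda>(c, \<alpha>, \<beta>). c * mon \<alpha> \<beta> z) P)"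

text \<open>The partial derivative of a monomial, by the quotient rule:
  \<open>\<partial>\<^sub>l mon \<alpha> \<beta> = \<alpha>\<^sub>l mon \<alpha> \<beta> - \<Sum>\<^sub>i \<beta>\<^sub>i \<xi>\<^sub>i\<^sub>l mon (\<alpha> + e\<^sub>l) (\<beta> + e\<^sub>i)\<close>.\<close>

definition mon_partial :: "nat \<Rightarrow> real \<times> (nat \<Rightarrow> nat) \<times> (nat \<Rightarrow> nat) \<Rightarrow> mon_sum" where
  "mon_partial l = (\<lambda>(c, \<alpha>, \<beta>). (c * real (\<alpha> l), \<alpha>, \<beta>) #
      map (\<lambda>i. (- c * real (\<beta> i) * \<xi> i l, \<alpha>(l := Suc (\<alpha> l)), \<beta>(i := Suc (\<beta> i)))) [0..<m])"

definition msum_partial :: "nat \<Rightarrow> mon_sum \<Rightarrow> mon_sum" where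
  "msum_partial l P = concat (map (mon_partial l) P)"

lemma msum_val_simps [simp]:
  "msum_val [] z = 0"
  "msum_val ((c, \<alpha>, \<beta>) # P) z = c * mon \<alpha> \<beta> z + msum_val P z"
  "msum_val (P @ Q) z = msum_val P z + msum_val Q z"
  by (simp_all add: msum_val_def)

lemma msum_partial_simps [simp]:
  "msum_partial l [] = []"
  "msum_partial l (x # P) = mon_partial l x @ msum_partial l P"
  "msum_partial l (P @ Q) = msum_partial l P @ msum_partial l Q"
  by (simp_all add: msum_partial_def)

lemma msum_val_map:
  "msum_val (map f xs) z = (\<Sum>x\<leftarrow>xs. (case f x of (c, \<alpha>, \<beta>) \<Rightarrow> c * mon \<alpha> \<beta> z))"
  by (induction xs) (auto simp: msum_val_def split: prod.splits)

lemma msum_val_mon_partial: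
  assumes "l < n"
  shows "msum_val (mon_partial l (c, \<alpha>, \<beta>)) z = c * mon \<alpha> \<beta> z * log_partial l \<alpha> \<beta> z"
proof -
  have "msum_val (mon_partial l (c, \<alpha>, \<beta>)) z = c * real (\<alpha> l) * mon \<alpha> \<beta> z
      - (\<Sum>i<m. c * real (\<beta> i) * \<xi> i l * (mon \<alpha> \<beta> z * (exp (z l) / denom i z)))"
    by (simp add: mon_partial_def msum_val_map atLeast0LessThan mon_fun_upd_Suc[OF assms] sum_negf
        flip: sum_set_upt_conv_sum_list_nat)
  then show ?thesis
    by (simp add: log_partial_def share_def algebra_simps sum_distrib_left)
qed

lemma msum_val_msum_partial:
  "l < n \<Longrightarrow> msum_val (msum_partial l P) z = (\<Sum>(c, \<alpha>, \<beta>)\<leftarrow>P. c * mon \<alpha> \<beta> z * log_partial l \<alpha> \<beta> z)"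
  by (induction P) (auto simp: msum_val_mon_partial)

lemma msum_val_has_derivative:
  assumes l: "l < n"
  shows "((\<lambda>t. msum_val P (z(l := t))) has_real_derivative msum_val (msum_partial l P) z) (at (z l))"
  unfolding msum_val_msum_partial[OF l]
proof (induction P)
  case (Cons x P)
  obtain c \<alpha> \<beta> where x: "x = (c, \<alpha>, \<beta>)" by (cases x)
  have "((\<lambda>t. c * mon \<alpha> \<beta> (z(l := t)) + msum_val P (z(l := t))) has_real_derivative
      c * (mon \<alpha> \<beta> z * log_partial l \<alpha> \<beta> z)
      + (\<Sum>(c, \<alpha>, \<beta>)\<leftarrow>P. c * mon \<alpha> \<beta> z * log_partial l \<alpha> \<beta> z)) (at (z l))"
    by (intro DERIV_add DERIV_cmult mon_has_derivative[OF l] Cons)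
  then show ?case
    unfolding x msum_val_simps by (simp add: mult.assoc del: fun_upd_apply)
qed simp

lemma partial_msum_val: "l < n \<Longrightarrow> partial l (msum_val P) = msum_val (msum_partial l P)"
  unfolding partial_def
  by (rule ext, rule DERIV_imp_deriv) (use msum_val_has_derivative in auto)

lemma log_partial_fun_upd_Suc:
  assumes "i < m"
  shows "log_partial l (\<alpha>(p := Suc (\<alpha> p))) (\<beta>(i := Suc (\<beta> i))) z
     = log_partial l \<alpha> \<beta> z + (if l = p then 1 else 0) - share i l z"
proof -
  have "(\<lambda>k. real ((\<beta>(i := Suc (\<beta> i))) k) * share k l z)
      = (\<lambda>k. real (\<beta> k) * share k l z)(i := real (\<beta> i) * share i l z + share i l z)"
    by (simp add: fun_eq_iff algebra_simps)
  then have "(\<Sum>k<m. real ((\<beta>(i := Suc (\<beta> i))) k) * share k l z)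
      = (\<Sum>k<m. real (\<beta> k) * share k l z) + share i l z"
    using sum_fun_upd_add[of "{..<m}" i "\<lambda>k. real (\<beta> k) * share k l z" "share i l z"] assms
    by (simp only:) simp
  then show ?thesis by (simp add: log_partial_def)
qed

lemma msum_val_partial_mon_partial:
  assumes l: "l < n" and p: "p < n"
  shows "msum_val (msum_partial l (mon_partial p (c, \<alpha>, \<beta>))) z = c * mon \<alpha> \<beta> z *
     (log_partial p \<alpha> \<beta> z * log_partial l \<alpha> \<beta> z
      - (if l = p then \<Sum>i<m. real (\<beta> i) * share i p z else 0)
      + (\<Sum>i<m. real (\<beta> i) * share i p z * share i l z))"
proof -
  define M where "M = mon \<alpha> \<beta> z"
  define G where "G = log_partial l \<alpha> \<beta> z"
  define \<delta> where "\<delta> = (if l = p then 1 else (0::real))"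
  define A where "A = (\<Sum>i<m. real (\<beta> i) * share i p z)"
  define B where "B = (\<Sum>i<m. real (\<beta> i) * share i p z * share i l z)"
  have shifted: "- c * real (\<beta> i) * \<xi> i p * mon (\<alpha>(p := Suc (\<alpha> p))) (\<beta>(i := Suc (\<beta> i))) z
      * log_partial l (\<alpha>(p := Suc (\<alpha> p))) (\<beta>(i := Suc (\<beta> i))) z
      = - c * M * (G + \<delta>) * (real (\<beta> i) * share i p z) + c * M * (real (\<beta> i) * share i p z * share i l z)"
    if "i \<in> {..<m}" for i
  proof -
    have i: "i < m" using that by simp
    show ?thesis
      unfolding mon_fun_upd_Suc[OF p i] log_partial_fun_upd_Suc[OF i] M_def G_def \<delta>_def share_def
      by (simp add: algebra_simps add_divide_distrib)
  qed
  have "msum_val (msum_partial l (mon_partial p (c, \<alpha>, \<beta>))) z = c * real (\<alpha> p) * M * G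
      + (\<Sum>i<m. - c * real (\<beta> i) * \<xi> i p * mon (\<alpha>(p := Suc (\<alpha> p))) (\<beta>(i := Suc (\<beta> i))) z
          * log_partial l (\<alpha>(p := Suc (\<alpha> p))) (\<beta>(i := Suc (\<beta> i))) z)"
  proof -
    have "mon_partial p (c, \<alpha>, \<beta>) = (c * real (\<alpha> p), \<alpha>, \<beta>) #
        map (\<lambda>i. (- c * real (\<beta> i) * \<xi> i p, \<alpha>(p := Suc (\<alpha> p)), \<beta>(i := Suc (\<beta> i)))) [0..<m]"
      by (simp add: mon_partial_def)
    then show ?thesis
      unfolding msum_val_msum_partial[OF l] by (simp add: M_def G_def o_def atLeast0LessThan flip: sum_set_upt_conv_sum_list_nat)
  qed
  also have "\<dots> = c * real (\<alpha> p) * M * G + (\<Sum>i<m. - c * M * (G + \<delta>) * (real (\<beta> i) * share i p z)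
      + c * M * (real (\<beta> i) * share i p z * share i l z))"
    by (rule arg_cong[where f = "\<lambda>x. _ + x"], rule sum.cong[OF refl shifted])
  also have "\<dots> = c * real (\<alpha> p) * M * G - c * M * (G + \<delta>) * A + c * M * B"
    by (simp add: sum.distrib A_def B_def sum_distrib_left sum_negf sum_subtractf)
  finally show ?thesis
    by (cases "l = p") (simp_all add: log_partial_def M_def G_def \<delta>_def A_def B_def algebra_simps)
qed

lemma msum_partial_commute:
  assumes "l < n" "p < n"
  shows "msum_val (msum_partial l (msum_partial p P)) = msum_val (msum_partial p (msum_partial l P))"
proof
  fix z show "msum_val (msum_partial l (msum_partial p P)) z = msum_val (msum_partial p (msum_partial l P)) z"
  proof (induction P)
    case (Cons x P)
    obtain c \<alpha> \<beta> where x: "x = (c, \<alpha>, \<beta>)" by (cases x)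
    show ?case
      using Cons msum_val_partial_mon_partial[OF assms, of c \<alpha> \<beta> z]
        msum_val_partial_mon_partial[OF assms(2,1), of c \<alpha> \<beta> z]
      by (cases "l = p") (simp_all add: x algebra_simps)
  qed simp
qed

sublocale commuting_partials n "range msum_val"
  by unfold_locales (auto simp: partial_msum_val msum_partial_commute)

definition mon_degree :: "real \<times> (nat \<Rightarrow> nat) \<times> (nat \<Rightarrow> nat) \<Rightarrow> nat" where
  "mon_degree = (\<lambda>(c, \<alpha>, \<beta>). (\<Sum>k<n. \<alpha> k) + (\<Sum>i<m. \<beta> i))"

lemma mon_degree_msum_partial:
  assumes "l < n" "y \<in> set (msum_partial l P)"
  shows "\<exists>x\<in>set P. mon_degree y \<le> mon_degree x + 2"
proof -
  obtain x where x: "x \<in> set P" "y \<in> set (mon_partial l x)"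
    using assms(2) by (auto simp: msum_partial_def)
  obtain c \<alpha> \<beta> where xe: "x = (c, \<alpha>, \<beta>)" by (cases x)
  from x(2) consider "y = (c * real (\<alpha> l), \<alpha>, \<beta>)"
    | i where "i < m" "y = (- c * real (\<beta> i) * \<xi> i l, \<alpha>(l := Suc (\<alpha> l)), \<beta>(i := Suc (\<beta> i)))"
    by (auto simp: mon_partial_def xe)
  then have "mon_degree y \<le> mon_degree x + 2"
  proof cases
    case (2 i)
    then show ?thesis
      using sum_fun_upd_Suc[of "{..<n}" l \<alpha>] sum_fun_upd_Suc[of "{..<m}" i \<beta>] assms(1)
      by (simp add: mon_degree_def xe del: fun_upd_apply)
  qed (simp add: mon_degree_def xe)
  with x(1) show ?thesis by blast
qed

lemma msum_norm_mon_partial: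
  assumes "l < n"
  shows "msum_norm (mon_partial l (c, \<alpha>, \<beta>)) = \<bar>c\<bar> * real (\<alpha> l) + \<bar>c\<bar> * (\<Sum>i<m. real (\<beta> i) * \<xi> i l)"
proof -
  have "(\<Sum>i<m. \<bar>c\<bar> * real (\<beta> i) * \<bar>\<xi> i l\<bar>) = (\<Sum>i<m. \<bar>c\<bar> * (real (\<beta> i) * \<xi> i l))"
    by (rule sum.cong) (use weights_nonneg assms in auto)
  then show ?thesis
    by (simp add: mon_partial_def msum_norm_def o_def abs_mult atLeast0LessThan sum_distrib_left
        flip: sum_set_upt_conv_sum_list_nat)
qed

text \<open>Summing over \<open>l\<close> uses up the normalisation of the weights.\<close>

lemma sum_msum_norm_mon_partial:
  "(\<Sum>l<n. msum_norm (mon_partial l (c, \<alpha>, \<beta>))) = \<bar>c\<bar> * real (mon_degree (c, \<alpha>, \<beta>))"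
proof -
  have "(\<Sum>l<n. msum_norm (mon_partial l (c, \<alpha>, \<beta>)))
      = \<bar>c\<bar> * real (\<Sum>l<n. \<alpha> l) + \<bar>c\<bar> * (\<Sum>i<m. real (\<beta> i) * (\<Sum>l<n. \<xi> i l))"
    by (simp add: msum_norm_mon_partial sum.distrib sum_distrib_left sum.swap[of _ "{..<n}" "{..<m}"])
  then show ?thesis by (simp add: weights_sum mon_degree_def algebra_simps)
qed

lemma sum_msum_norm_msum_partial_le:
  "(\<And>x. x \<in> set P \<Longrightarrow> mon_degree x \<le> s) \<Longrightarrow> (\<Sum>l<n. msum_norm (msum_partial l P)) \<le> real s * msum_norm P"
proof (induction P)
  case (Cons x P)
  obtain c \<alpha> \<beta> where x: "x = (c, \<alpha>, \<beta>)" by (cases x)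
  have "\<bar>c\<bar> * real (mon_degree x) \<le> \<bar>c\<bar> * real s"
    using Cons.prems by (intro mult_left_mono) simp_all
  with Cons show ?case
    by (simp add: sum.distrib x sum_msum_norm_mon_partial algebra_simps)
qed simp

lemma mon_at_0: "mon \<alpha> \<beta> (\<lambda>_. 0) = 1"
  by (simp add: mon_def denom_def weights_sum)

lemma abs_msum_val_0_le: "\<bar>msum_val P (\<lambda>_. 0)\<bar> \<le> msum_norm P"
proof (induction P)
  case (Cons x P)
  then show ?case by (cases x) (simp add: mon_at_0 abs_triangle_ineq order_trans[OF abs_triangle_ineq])
qed simp


lemma taylor_norm_msum_val_le:
  assumes "\<And>x. x \<in> set P \<Longrightarrow> mon_degree x \<le> s"
  shows "taylor_norm n d (msum_val P) \<le> (\<Prod>t<d. real s + 2 * real t) / fact d * msum_norm P"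
  using assms
proof (induction d arbitrary: P s)
  case 0
  then show ?case by (simp add: taylor_norm_0 abs_msum_val_0_le)
next
  case (Suc d)
  define K where "K = (\<Prod>t<d. real (s + 2) + 2 * real t) / fact d"
  have "K \<ge> 0" unfolding K_def by (intro divide_nonneg_pos prod_nonneg) auto
  have "taylor_norm n (Suc d) (msum_val P) = (\<Sum>l<n. taylor_norm n d (msum_val (msum_partial l P))) / real (Suc d)"
    by (simp add: taylor_norm_Suc partial_msum_val)
  also have "\<dots> \<le> (\<Sum>l<n. K * msum_norm (msum_partial l P)) / real (Suc d)"
  proof (intro divide_right_mono sum_mono)
    fix l assume "l \<in> {..<n}"
    then have "mon_degree y \<le> s + 2" if "y \<in> set (msum_partial l P)" for y
      using mon_degree_msum_partial[OF _ that] Suc.prems by fastforce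
    then show "taylor_norm n d (msum_val (msum_partial l P)) \<le> K * msum_norm (msum_partial l P)"
      unfolding K_def by (rule Suc.IH)
  qed simp
  also have "\<dots> \<le> K * (real s * msum_norm P) / real (Suc d)"
    unfolding sum_distrib_left[symmetric]
    by (intro divide_right_mono mult_left_mono sum_msum_norm_msum_partial_le Suc.prems \<open>K \<ge> 0\<close>) simp_all
  also have "\<dots> = (\<Prod>t<Suc d. real s + 2 * real t) / fact (Suc d) * msum_norm P"
    unfolding prod.lessThan_Suc_shift K_def by (simp add: field_simps)
  finally show ?case .
qed

lemma prod_softmax_type_eq_msum_val:
  assumes "\<And>i. i < m \<Longrightarrow> j i < n"
  shows "(\<lambda>z. \<Prod>i<m. softmax_type n (j i) (\<xi> i) z) = msum_val [(1, \<lambda>k. card {i\<in>{..<m}. j i = k}, \<lambda>_. 1)]"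
proof
  fix z
  have "msum_val [(1, \<lambda>k. card {i\<in>{..<m}. j i = k}, \<lambda>_. 1)] z = exp ((\<Sum>i<m. z (j i)) - (\<Sum>i<m. ln (denom i z)))"
    using sum_card_fibres[OF assms, where z = z] by (simp add: mon_def)
  also have "\<dots> = (\<Prod>i<m. exp (z (j i)) / denom i z)"
    by (simp add: exp_diff exp_sum denom_pos prod_dividef)
  finally show "(\<Prod>i<m. softmax_type n (j i) (\<xi> i) z) = msum_val [(1, \<lambda>k. card {i\<in>{..<m}. j i = k}, \<lambda>_. 1)] z"
    by (simp add: softmax_type_def denom_def)
qed

lemma mon_degree_softmax:
  assumes "\<And>i. i < m \<Longrightarrow> j i < n"
  shows "mon_degree (1, \<lambda>k. card {i\<in>{..<m}. j i = k}, \<lambda>_. 1) = 2 * m"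
proof -
  have "real (\<Sum>k<n. card {i\<in>{..<m}. j i = k}) = real m"
    using sum_card_fibres[OF assms, where z = "\<lambda>_. 1"] by simp
  then show ?thesis by (simp only: mon_degree_def of_nat_eq_iff prod.case) simp
qed

end

lemma prod_rising_le_power:
  "(\<Prod>t<d. 2 * real m + 2 * real t) / fact d \<le> (2 * real m) ^ d"
proof (cases "m = 0 \<and> d > 0")
  case True
  then have "(\<Prod>t<d. 2 * real m + 2 * real t) = 0"
    by (auto simp: prod_zero_iff)
  then show ?thesis using True by (simp del: prod_zero_iff)
next
  case False
  have "(\<Prod>t<d. 2 * real m + 2 * real t) \<le> (\<Prod>t<d. 2 * real m * (real t + 1))"
  proof (rule prod_mono)
    fix t assume "t \<in> {..<d}"
    with False have "1 \<le> real m" by auto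
    then have "real t \<le> real m * real t" using mult_right_mono[of 1 "real m" "real t"] by simp
    then show "0 \<le> 2 * real m + 2 * real t \<and> 2 * real m + 2 * real t \<le> 2 * real m * (real t + 1)"
      by (simp add: algebra_simps)
  qed
  also have "\<dots> = (2 * real m) ^ d * fact d"
    by (simp add: prod.distrib fact_prod_Suc atLeast0LessThan add.commute)
  finally show ?thesis by (simp add: divide_le_eq)
qed

theorem lemmaB6:
  fixes m n :: nat and j :: "nat \<Rightarrow> nat" and \<xi> :: "nat \<Rightarrow> nat \<Rightarrow> real"
  assumes "\<And>i. i < m \<Longrightarrow> j i < n"
    and "\<And>i k. i < m \<Longrightarrow> k < n \<Longrightarrow> \<xi> i k \<ge> 0"
    and "\<And>i. i < m \<Longrightarrow> (\<Sum>k<n. \<xi> i k) = 1"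
  shows "(\<Sum>\<gamma>\<in>multi_indices n d.
            \<bar>taylor_coeff n (\<lambda>z. \<Prod>i<m. softmax_type n (j i) (\<xi> i) z) \<gamma>\<bar>)
         \<le> (exp 3 * real m) ^ d"
proof -
  interpret softmax_weights n m \<xi>
    using assms(2,3) by unfold_locales
  let ?P = "[(1, \<lambda>k. card {i\<in>{..<m}. j i = k}, \<lambda>_. 1)]"
  have "taylor_norm n d (msum_val ?P) \<le> (\<Prod>t<d. real (2 * m) + 2 * real t) / fact d * msum_norm ?P"
    by (rule taylor_norm_msum_val_le) (use mon_degree_softmax[OF assms(1)] in simp)
  also have "\<dots> \<le> (2 * real m) ^ d"
    using prod_rising_le_power[of m d] by simp
  also have "\<dots> \<le> (exp 3 * real m) ^ d"
    using exp_ge_add_one_self[of 3] by (intro power_mono mult_right_mono) simp_all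
  finally show ?thesis
    by (simp add: taylor_norm_def prod_softmax_type_eq_msum_val[OF assms(1)])
qed

end
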